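(* Consider a non-explosive stochastic reaction network as in the context with product-form propensities, and fix $T>0$ and $c^*>0$. Suppose that (a) (Property 1 at $(T,c^* )$) for every unconsuming reaction $j \in \mathcal{U}$ there exists $\epsilon_j>0$ with $\mathbb{E}\left(e^{\epsilon_j R_j(T,c^* )}\right) < \infty$; and (b) either reaction $1$ is unconsuming ($1 \in \mathcal{U}$), or $1\in\mathcal{C}$ and for every $y \in [0,\infty)^n$ the set \[ \mathcal{R}_y = \Big\{ \xi = (\xi_j)_{j\in\mathcal{C}} \in [0,\infty)^{\mathcal{C}} : y + \sum_{j\in\mathcal{C}} \nu_j \xi_j \ge 0 \text{ componentwise} \Big\} \] is bounded in the coordinate $\xi_1$, i.e. $\sup\{\xi_1 : \xi \in \mathcal{R}_y\}<\infty$. Then there exists $\epsilon>0$ such that \[ \mathbb{E}\left[ \left(\frac{c^*+\epsilon}{c^*}\right)^{R_1(T,c^* )} \right] < \infty . \]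
   Context: Stochastic reaction network: $n$ species, $m$ reaction channels with stoichiometric vectors $\nu_j = (\nu_{1j},\dots,\nu_{nj}) \in \mathbb{Z}^n$ and propensities of product form $a_j(x,c_j) = c_j b_j(x)$ with $c_j>0$ and $b_j:\mathbb{Z}_+^n\to[0,\infty)$; the parameter of interest is $c=c_1$ with nominal value $c^*$. On a probability space carrying independent unit-rate Poisson processes $Y_1,\dots,Y_m$, $X(t,c) = x_0 + \sum_j \nu_j R_j(t,c)$, $R_j(t,c) = Y_j\left(\int_0^t a_j(X(s,c),c)\,ds\right)$, with fixed $x_0 \in \mathbb{Z}_+^n$; non-explosive means $R_j(t,c)<\infty$ a.s. for all $t,c,j$. A reaction $j$ is called unconsuming if $\nu_{ij}\ge 0$ for all $i=1,\dots,n$, and consuming otherwise; $\mathcal{U}$ and $\mathcal{C}$ denote the index sets of unconsuming and consuming reactions. *)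

theory Defs
  imports "HOL-Probability.Probability"
begin

text \<open>Reactions are indexed by 1..m; species by a finite type 'n.
  Independent unit-rate Poisson processes Y_1..Y_m are realised through their
  i.i.d. Exp(1) inter-arrival times E (j,k), j in 1..m, k in nat.\<close>

definition unit_poisson_family :: "'a measure \<Rightarrow> (nat \<times> nat \<Rightarrow> 'a \<Rightarrow> real) \<Rightarrow> nat \<Rightarrow> bool" where
  "unit_poisson_family M E m \<longleftrightarrow>
     prob_space M \<and>
     prob_space.indep_vars M (\<lambda>_. borel) E ({1..m} \<times> UNIV) \<and>
     (\<forall>j\<in>{1..m}. \<forall>k. distributed M lborel (E (j,k)) (\<lambda>x. ennreal (exponential_density 1 x)))"

definition poisson_count :: "(nat \<times> nat \<Rightarrow> 'a \<Rightarrow> real) \<Rightarrow> nat \<Rightarrow> real \<Rightarrow> 'a \<Rightarrow> nat" where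
  "poisson_count E j u \<omega> = card {k. (\<Sum>i\<le>k. E (j,i) \<omega>) \<le> u}"

definition rate :: "(nat \<Rightarrow> real) \<Rightarrow> real \<Rightarrow> nat \<Rightarrow> real" where
  "rate cc c j = (if j = 1 then c else cc j)"

text \<open>Pathwise random time change representation on [0,\<infinity>), with finite
  (hence non-explosive) counts.\<close>
definition rtc_solution ::
  "nat \<Rightarrow> int^'n \<Rightarrow> (nat \<Rightarrow> int^'n) \<Rightarrow> (nat \<Rightarrow> int^'n \<Rightarrow> real) \<Rightarrow> (nat \<Rightarrow> real)
   \<Rightarrow> (nat \<times> nat \<Rightarrow> 'a \<Rightarrow> real) \<Rightarrow> real \<Rightarrow> (real \<Rightarrow> real \<Rightarrow> 'a \<Rightarrow> int^'n)
   \<Rightarrow> (nat \<Rightarrow> real \<Rightarrow> real \<Rightarrow> 'a \<Rightarrow> nat) \<Rightarrow> 'a \<Rightarrow> bool" where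
  "rtc_solution m x0 \<nu> b cc E c X R \<omega> \<longleftrightarrow>
     (\<forall>t\<ge>0.
        (\<forall>j\<in>{1..m}.
           (\<lambda>s. rate cc c j * b j (X s c \<omega>)) integrable_on {0..t} \<and>
           R j t c \<omega> = poisson_count E j (integral {0..t} (\<lambda>s. rate cc c j * b j (X s c \<omega>))) \<omega>) \<and>
        X t c \<omega> = x0 + (\<Sum>j\<in>{1..m}. int (R j t c \<omega>) *s \<nu> j) \<and>
        (\<forall>i. X t c \<omega> $ i \<ge> 0))"

definition unconsuming :: "(nat \<Rightarrow> int^'n) \<Rightarrow> nat \<Rightarrow> bool" where
  "unconsuming \<nu> j \<longleftrightarrow> (\<forall>i. \<nu> j $ i \<ge> 0)"

definition unconsuming_set :: "(nat \<Rightarrow> int^'n) \<Rightarrow> nat \<Rightarrow> nat set" where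
  "unconsuming_set \<nu> m = {j \<in> {1..m}. unconsuming \<nu> j}"

definition consuming_set :: "(nat \<Rightarrow> int^'n) \<Rightarrow> nat \<Rightarrow> nat set" where
  "consuming_set \<nu> m = {j \<in> {1..m}. \<not> unconsuming \<nu> j}"

text \<open>The set R_y, with xi in [0,\<infinity>)^C represented by functions vanishing off C.\<close>
definition reach_set :: "(nat \<Rightarrow> int^'n) \<Rightarrow> nat \<Rightarrow> real^'n \<Rightarrow> (nat \<Rightarrow> real) set" where
  "reach_set \<nu> m y =
     {\<xi>. (\<forall>j\<in>consuming_set \<nu> m. \<xi> j \<ge> 0) \<and> (\<forall>j. j \<notin> consuming_set \<nu> m \<longrightarrow> \<xi> j = 0) \<and>
          (\<forall>i. y $ i + (\<Sum>j\<in>consuming_set \<nu> m. real_of_int (\<nu> j $ i) * \<xi> j) \<ge> 0)}"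

end

theory Submission
  imports Defs
begin

text \<open>On every path solving the random time change equations, the consuming counts
  at time T lie in R_y for y = x0 + \<Sum>_{j \<in> U} R_j(T) \<nu>_j. Since R_y scales with y, a
  bound B on the first coordinate over R_(1,...,1) gives R_1(T) \<le> B (1 + \<Sum>_i y_i), i.e.
  R_1(T) \<le> K0 + \<Sum>_{j \<in> U} K_j R_j(T) with K_j \<ge> 0 (trivially so if reaction 1 is
  unconsuming). Because exp of a sum of k nonnegative terms is at most 1 plus the sum of
  the exps of k times each term, Property 1 makes exp(\<delta> (K0 + \<Sum> K_j R_j(T))) integrable
  for small \<delta> > 0; and ((c + \<epsilon>)/c)^n = exp(\<delta> n) for \<epsilon> = c (e^\<delta> - 1).\<close>

lemma exp_sum_le_one_plus_sum_exp:
  fixes a :: "'b \<Rightarrow> real"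
  assumes "finite U" "\<And>j. j \<in> U \<Longrightarrow> a j \<ge> 0"
  shows "exp (\<Sum>j\<in>U. a j) \<le> 1 + (\<Sum>j\<in>U. exp (real (card U) * a j))"
proof (cases "U = {}")
  case True then show ?thesis by simp
next
  case False
  obtain j0 where j0: "j0 \<in> U" "\<forall>j\<in>U. a j \<le> a j0"
    using Max_in[of "a ` U"] assms(1) False
    by (metis (no_types, lifting) Max_ge finite_imageI image_iff image_is_empty)
  have "(\<Sum>j\<in>U. a j) \<le> (\<Sum>j\<in>U. a j0)" using j0 by (intro sum_mono) auto
  also have "\<dots> = real (card U) * a j0" by simp
  finally have "exp (\<Sum>j\<in>U. a j) \<le> exp (real (card U) * a j0)" by simp
  also have "\<dots> \<le> (\<Sum>j\<in>U. exp (real (card U) * a j))"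
    using j0(1) assms(1) by (intro member_le_sum) auto
  finally show ?thesis by simp
qed

lemma ex_pos_mult_le_all:
  fixes e c :: "'b \<Rightarrow> real"
  assumes "finite U" "\<And>j. j \<in> U \<Longrightarrow> e j > 0" "\<And>j. j \<in> U \<Longrightarrow> c j \<ge> 0"
  shows "\<exists>\<delta>>0. \<forall>j\<in>U. \<delta> * c j \<le> e j"
proof -
  define \<delta> where "\<delta> = Min (insert 1 ((\<lambda>j. e j / (c j + 1)) ` U))"
  have "\<delta> > 0" unfolding \<delta>_def using assms by (auto simp: add_nonneg_pos)
  moreover have "\<delta> * c j \<le> e j" if "j \<in> U" for j
  proof -
    have "\<delta> \<le> e j / (c j + 1)" unfolding \<delta>_def using assms(1) that by (intro Min_le) auto
    then have "\<delta> * (c j + 1) \<le> e j" using assms(3)[OF that] by (simp add: le_divide_eq)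
    then show ?thesis using \<open>\<delta> > 0\<close> by (simp add: algebra_simps)
  qed
  ultimately show ?thesis by blast
qed

lemma (in prob_space) nn_integral_exp_nonneg_combination_finite:
  fixes g :: "'b \<Rightarrow> 'a \<Rightarrow> real" and K :: "'b \<Rightarrow> real"
  assumes U: "finite U"
    and g_meas: "\<And>j. j \<in> U \<Longrightarrow> g j \<in> borel_measurable M"
    and g_nonneg: "\<And>j \<omega>. j \<in> U \<Longrightarrow> g j \<omega> \<ge> 0"
    and moment: "\<And>j. j \<in> U \<Longrightarrow> \<exists>\<epsilon>>0. (\<integral>\<^sup>+ \<omega>. ennreal (exp (\<epsilon> * g j \<omega>)) \<partial>M) < \<infinity>"
    and K_nonneg: "\<And>j. j \<in> U \<Longrightarrow> K j \<ge> 0"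
  shows "\<exists>\<delta>>0. (\<integral>\<^sup>+ \<omega>. ennreal (exp (\<delta> * (K0 + (\<Sum>j\<in>U. K j * g j \<omega>)))) \<partial>M) < \<infinity>"
proof -
  obtain \<epsilon> where \<epsilon>: "\<And>j. j \<in> U \<Longrightarrow> \<epsilon> j > 0"
    and \<epsilon>_moment: "\<And>j. j \<in> U \<Longrightarrow> (\<integral>\<^sup>+ \<omega>. ennreal (exp (\<epsilon> j * g j \<omega>)) \<partial>M) < \<infinity>"
    using moment by metis
  obtain \<delta> where \<delta>: "\<delta> > 0" and \<delta>_le: "\<forall>j\<in>U. \<delta> * (real (card U) * K j) \<le> \<epsilon> j"
    using ex_pos_mult_le_all[of U \<epsilon> "\<lambda>j. real (card U) * K j"] U \<epsilon> K_nonneg by auto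
  define F where "F j \<omega> = ennreal (exp (\<epsilon> j * g j \<omega>))" for j \<omega>
  define C where "C = ennreal (exp (\<delta> * K0))"
  have F_meas: "F j \<in> borel_measurable M" if "j \<in> U" for j
    unfolding F_def using g_meas[OF that] by measurable
  have pointwise: "ennreal (exp (\<delta> * (K0 + (\<Sum>j\<in>U. K j * g j \<omega>)))) \<le> C * (1 + (\<Sum>j\<in>U. F j \<omega>))"
    for \<omega>
  proof -
    have "exp (\<delta> * (K0 + (\<Sum>j\<in>U. K j * g j \<omega>)))
        = exp (\<delta> * K0) * exp (\<Sum>j\<in>U. \<delta> * K j * g j \<omega>)"
      by (simp add: distrib_left sum_distrib_left mult.assoc exp_add)
    also have "\<dots> \<le> exp (\<delta> * K0) * (1 + (\<Sum>j\<in>U. exp (real (card U) * (\<delta> * K j * g j \<omega>))))"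
      using U \<delta> K_nonneg g_nonneg by (intro mult_left_mono exp_sum_le_one_plus_sum_exp) auto
    also have "\<dots> \<le> exp (\<delta> * K0) * (1 + (\<Sum>j\<in>U. exp (\<epsilon> j * g j \<omega>)))"
    proof -
      have "real (card U) * (\<delta> * K j * g j \<omega>) \<le> \<epsilon> j * g j \<omega>" if "j \<in> U" for j
        using mult_right_mono[OF bspec[OF \<delta>_le that] g_nonneg[OF that]]
        by (simp add: algebra_simps)
      then show ?thesis by (intro mult_left_mono add_left_mono sum_mono) auto
    qed
    finally have "ennreal (exp (\<delta> * (K0 + (\<Sum>j\<in>U. K j * g j \<omega>))))
        \<le> ennreal (exp (\<delta> * K0) * (1 + (\<Sum>j\<in>U. exp (\<epsilon> j * g j \<omega>))))"
      by (rule ennreal_leI)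
    also have "\<dots> = C * (1 + (\<Sum>j\<in>U. F j \<omega>))"
      unfolding C_def F_def by (simp add: ennreal_mult' ennreal_plus sum_nonneg)
    finally show ?thesis .
  qed
  have "(\<integral>\<^sup>+ \<omega>. ennreal (exp (\<delta> * (K0 + (\<Sum>j\<in>U. K j * g j \<omega>)))) \<partial>M)
      \<le> (\<integral>\<^sup>+ \<omega>. C * (1 + (\<Sum>j\<in>U. F j \<omega>)) \<partial>M)"
    using pointwise by (intro nn_integral_mono) auto
  also have "\<dots> = C * (1 + (\<Sum>j\<in>U. integral\<^sup>N M (F j)))"
    using F_meas by (simp add: nn_integral_cmult nn_integral_add nn_integral_sum
        borel_measurable_sum emeasure_space_1)
  also have "\<dots> < \<infinity>"
    using \<epsilon>_moment U unfolding C_def F_def by (simp add: ennreal_sum_less_top ennreal_mult_less_top)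
  finally show ?thesis using \<delta> by blast
qed

lemma reach_set_coord_le_scaled:
  fixes y :: "real^'n"
  assumes B: "\<forall>\<xi>\<in>reach_set \<nu> m (\<chi> i. 1). \<xi> k \<le> B"
    and y: "\<forall>i. y $ i \<ge> 0" and \<xi>: "\<xi> \<in> reach_set \<nu> m y"
  shows "\<xi> k \<le> B * (1 + (\<Sum>i\<in>UNIV. y $ i))"
proof -
  define t where "t = 1 + (\<Sum>i\<in>UNIV. y $ i)"
  have t: "t \<ge> 1" unfolding t_def using y by (simp add: sum_nonneg)
  have y_le_t: "y $ i \<le> t" for i
    using member_le_sum[of i UNIV "\<lambda>i. y $ i"] y unfolding t_def by auto
  have "(\<lambda>j. \<xi> j / t) \<in> reach_set \<nu> m (\<chi> i. 1)"
  proof -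
    have "1 + (\<Sum>j\<in>consuming_set \<nu> m. real_of_int (\<nu> j $ i) * (\<xi> j / t)) \<ge> 0" for i
    proof -
      have "y $ i + (\<Sum>j\<in>consuming_set \<nu> m. real_of_int (\<nu> j $ i) * \<xi> j) \<ge> 0"
        using \<xi> unfolding reach_set_def by auto
      then have "(\<Sum>j\<in>consuming_set \<nu> m. real_of_int (\<nu> j $ i) * \<xi> j) / t \<ge> -1"
        using y_le_t[of i] t by (simp add: divide_simps)
      then show ?thesis by (simp add: sum_divide_distrib)
    qed
    then show ?thesis using \<xi> t unfolding reach_set_def by auto
  qed
  then have "\<xi> k / t \<le> B" using B by auto
  then show ?thesis using t unfolding t_def by (simp add: divide_simps)
qed

lemma consuming_counts_in_reach_set:
  fixes r :: "nat \<Rightarrow> nat" and x0 :: "int^'n"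
  assumes "\<forall>i. (x0 + (\<Sum>j\<in>{1..m}. int (r j) *s \<nu> j)) $ i \<ge> 0"
  shows "(\<lambda>j. if j \<in> consuming_set \<nu> m then real (r j) else 0) \<in> reach_set \<nu> m
           (\<chi> i. real_of_int (x0 $ i) + (\<Sum>j\<in>unconsuming_set \<nu> m. real (r j) * real_of_int (\<nu> j $ i)))"
  (is "?\<xi> \<in> reach_set \<nu> m ?y")
  unfolding reach_set_def
proof (intro CollectI conjI allI ballI impI)
  fix i
  let ?U = "unconsuming_set \<nu> m" and ?C = "consuming_set \<nu> m"
  have split: "{1..m} = ?U \<union> ?C" "?U \<inter> ?C = {}" "finite ?U" "finite ?C"
    unfolding unconsuming_set_def consuming_set_def by auto
  have "real_of_int ((x0 + (\<Sum>j\<in>{1..m}. int (r j) *s \<nu> j)) $ i)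
      = real_of_int (x0 $ i) + (\<Sum>j\<in>{1..m}. real (r j) * real_of_int (\<nu> j $ i))"
    by simp
  also have "\<dots> = ?y $ i + (\<Sum>j\<in>?C. real_of_int (\<nu> j $ i) * ?\<xi> j)"
    unfolding split(1) using split(2-) by (simp add: sum.union_disjoint mult.commute)
  finally show "?y $ i + (\<Sum>j\<in>?C. real_of_int (\<nu> j $ i) * ?\<xi> j) \<ge> 0"
    using assms by (metis of_int_0_le_iff)
qed auto

lemma consumed_count_le_unconsumed_counts:
  fixes r :: "nat \<Rightarrow> nat" and x0 :: "int^'n"
  assumes k: "k \<in> consuming_set \<nu> m"
    and B: "\<forall>\<xi>\<in>reach_set \<nu> m (\<chi> i. 1). \<xi> k \<le> B"
    and x0: "\<forall>i. x0 $ i \<ge> 0"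
    and state: "\<forall>i. (x0 + (\<Sum>j\<in>{1..m}. int (r j) *s \<nu> j)) $ i \<ge> 0"
  shows "real (r k) \<le> B * (1 + (\<Sum>i\<in>UNIV. real_of_int (x0 $ i)))
           + (\<Sum>j\<in>unconsuming_set \<nu> m. B * (\<Sum>i\<in>UNIV. real_of_int (\<nu> j $ i)) * real (r j))"
proof -
  let ?U = "unconsuming_set \<nu> m"
  define y :: "real^'n" where
    "y = (\<chi> i. real_of_int (x0 $ i) + (\<Sum>j\<in>?U. real (r j) * real_of_int (\<nu> j $ i)))"
  have y: "\<forall>i. y $ i \<ge> 0"
    using x0 unfolding y_def unconsuming_set_def unconsuming_def
    by (auto intro!: add_nonneg_nonneg sum_nonneg)
  have "real (r k) \<le> B * (1 + (\<Sum>i\<in>UNIV. y $ i))"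
    using reach_set_coord_le_scaled[OF B y consuming_counts_in_reach_set[OF state, folded y_def]] k
    by simp
  also have "(\<Sum>i\<in>UNIV. y $ i) = (\<Sum>i\<in>UNIV. real_of_int (x0 $ i))
      + (\<Sum>j\<in>?U. real (r j) * (\<Sum>i\<in>UNIV. real_of_int (\<nu> j $ i)))"
    unfolding y_def by (simp add: sum.distrib sum_distrib_left sum.swap[of _ ?U])
  finally show ?thesis by (simp add: algebra_simps sum_distrib_left)
qed

lemma rtc_solution_counts_nonneg:
  assumes "rtc_solution m x0 \<nu> b cc E c X R \<omega>" "t \<ge> 0"
  shows "\<forall>i. (x0 + (\<Sum>j\<in>{1..m}. int (R j t c \<omega>) *s \<nu> j)) $ i \<ge> 0"
  using assms unfolding rtc_solution_def by metis

lemma rtc_solution_count_le_unconsuming_combination: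
  assumes x0: "\<forall>i. x0 $ i \<ge> 0" and t: "t \<ge> 0"
    and k: "k \<in> unconsuming_set \<nu> m \<or>
            (k \<in> consuming_set \<nu> m \<and> bdd_above ((\<lambda>\<xi>. \<xi> k) ` reach_set \<nu> m (\<chi> i. 1)))"
  obtains K0 K where "\<And>j. j \<in> unconsuming_set \<nu> m \<Longrightarrow> K j \<ge> 0"
    and "\<And>\<omega>. rtc_solution m x0 \<nu> b cc E c X R \<omega> \<Longrightarrow>
           real (R k t c \<omega>) \<le> K0 + (\<Sum>j\<in>unconsuming_set \<nu> m. K j * real (R j t c \<omega>))"
proof (cases "k \<in> unconsuming_set \<nu> m")
  case True
  have "(\<Sum>j\<in>unconsuming_set \<nu> m. of_bool (j = k) * r j) = r k" for r :: "nat \<Rightarrow> real"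
    using True finite_subset[of "unconsuming_set \<nu> m" "{1..m}"]
    by (simp add: unconsuming_set_def of_bool_def if_distrib[of "\<lambda>x. x * _"] sum.delta cong: if_cong)
  then show ?thesis using that[of "\<lambda>j. of_bool (j = k)" 0] by simp
next
  case False
  with k obtain B where k: "k \<in> consuming_set \<nu> m"
    and B: "\<forall>\<xi>\<in>reach_set \<nu> m (\<chi> i. 1). \<xi> k \<le> B"
    by (auto simp: bdd_above_def)
  have "(\<lambda>_. 0) \<in> reach_set \<nu> m (\<chi> i. 1)" unfolding reach_set_def by auto
  then have "B \<ge> 0" using B by fastforce
  then have "B * (\<Sum>i\<in>UNIV. real_of_int (\<nu> j $ i)) \<ge> 0" if "j \<in> unconsuming_set \<nu> m" for j
    using that unfolding unconsuming_set_def unconsuming_def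
    by (auto intro!: mult_nonneg_nonneg sum_nonneg)
  moreover have "real (R k t c \<omega>) \<le> B * (1 + (\<Sum>i\<in>UNIV. real_of_int (x0 $ i)))
      + (\<Sum>j\<in>unconsuming_set \<nu> m. B * (\<Sum>i\<in>UNIV. real_of_int (\<nu> j $ i)) * real (R j t c \<omega>))"
    if "rtc_solution m x0 \<nu> b cc E c X R \<omega>" for \<omega>
    by (rule consumed_count_le_unconsumed_counts[OF k B x0 rtc_solution_counts_nonneg[OF that t]])
  ultimately show ?thesis by (rule that)
qed

lemma nn_integral_base_power_finite:
  fixes N :: "'a \<Rightarrow> nat"
  assumes c: "c > 0" and \<delta>: "\<delta> > 0"
    and N_le: "AE \<omega> in M. real (N \<omega>) \<le> G \<omega>"
    and finite: "(\<integral>\<^sup>+ \<omega>. ennreal (exp (\<delta> * G \<omega>)) \<partial>M) < \<infinity>"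
  shows "\<exists>\<epsilon>>0. (\<integral>\<^sup>+ \<omega>. ennreal (((c + \<epsilon>) / c) ^ N \<omega>) \<partial>M) < \<infinity>"
proof -
  define \<epsilon> where "\<epsilon> = c * (exp \<delta> - 1)"
  have "(c + \<epsilon>) / c = exp \<delta>" unfolding \<epsilon>_def using c by (simp add: field_simps)
  then have power_eq: "((c + \<epsilon>) / c) ^ N \<omega> = exp (\<delta> * real (N \<omega>))" for \<omega>
    by (simp add: exp_of_nat_mult[symmetric] mult.commute)
  have "AE \<omega> in M. ennreal (((c + \<epsilon>) / c) ^ N \<omega>) \<le> ennreal (exp (\<delta> * G \<omega>))"
    using N_le by eventually_elim (unfold power_eq, intro ennreal_leI, use \<delta> in auto)
  then have "(\<integral>\<^sup>+ \<omega>. ennreal (((c + \<epsilon>) / c) ^ N \<omega>) \<partial>M) < \<infinity>"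
    using finite by (rule nn_integral_mono_AE[THEN le_less_trans])
  moreover have "\<epsilon> > 0" unfolding \<epsilon>_def using \<delta> c by simp
  ultimately show ?thesis by blast
qed

theorem mainTheorem6:
  fixes M :: "'a measure" and E :: "nat \<times> nat \<Rightarrow> 'a \<Rightarrow> real"
    and m :: nat and x0 :: "int^'n" and \<nu> :: "nat \<Rightarrow> int^'n"
    and b :: "nat \<Rightarrow> int^'n \<Rightarrow> real" and cc :: "nat \<Rightarrow> real"
    and X :: "real \<Rightarrow> real \<Rightarrow> 'a \<Rightarrow> int^'n" and R :: "nat \<Rightarrow> real \<Rightarrow> real \<Rightarrow> 'a \<Rightarrow> nat"
    and T cstar :: real
  assumes poisson: "unit_poisson_family M E m"
    and m_pos: "1 \<le> m"
    and x0_nonneg: "\<forall>i. x0 $ i \<ge> 0"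
    and cc_pos: "\<forall>j\<in>{1..m}. cc j > 0"
    and b_nonneg: "\<forall>j\<in>{1..m}. \<forall>x. (\<forall>i. x $ i \<ge> 0) \<longrightarrow> b j x \<ge> 0"
    and R_meas: "\<forall>c>0. \<forall>j\<in>{1..m}. \<forall>t\<ge>0. R j t c \<in> measurable M (count_space UNIV)"
    and nonexplosive_rtc: "\<forall>c>0. AE \<omega> in M. rtc_solution m x0 \<nu> b cc E c X R \<omega>"
    and T_pos: "T > 0" and cstar_pos: "cstar > 0"
    and prop1: "\<forall>j\<in>unconsuming_set \<nu> m. \<exists>\<epsilon>>0.
                  (\<integral>\<^sup>+ \<omega>. ennreal (exp (\<epsilon> * real (R j T cstar \<omega>))) \<partial>M) < \<infinity>"
    and cond_b: "1 \<in> unconsuming_set \<nu> m \<or>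
                 (1 \<in> consuming_set \<nu> m \<and>
                  (\<forall>y::real^'n. (\<forall>i. y $ i \<ge> 0) \<longrightarrow> bdd_above ((\<lambda>\<xi>. \<xi> 1) ` reach_set \<nu> m y)))"
  shows "\<exists>\<epsilon>>0. (\<integral>\<^sup>+ \<omega>. ennreal (((cstar + \<epsilon>) / cstar) ^ R 1 T cstar \<omega>) \<partial>M) < \<infinity>"
proof -
  interpret prob_space M using poisson unfolding unit_poisson_family_def by auto
  let ?U = "unconsuming_set \<nu> m" and ?R = "\<lambda>j \<omega>. real (R j T cstar \<omega>)"
  have U: "finite ?U" "?U \<subseteq> {1..m}" unfolding unconsuming_set_def by auto
  have "1 \<in> ?U \<or> (1 \<in> consuming_set \<nu> m \<and>
          bdd_above ((\<lambda>\<xi>. \<xi> 1) ` reach_set \<nu> m (\<chi> i. 1)))"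
    using cond_b by auto
  then obtain K0 K where K: "\<And>j. j \<in> ?U \<Longrightarrow> K j \<ge> 0"
    and R1_le: "\<And>\<omega>. rtc_solution m x0 \<nu> b cc E cstar X R \<omega> \<Longrightarrow>
                  ?R 1 \<omega> \<le> K0 + (\<Sum>j\<in>?U. K j * ?R j \<omega>)"
    by (rule rtc_solution_count_le_unconsuming_combination[OF x0_nonneg less_imp_le[OF T_pos]])
      (rule that)
  have "AE \<omega> in M. rtc_solution m x0 \<nu> b cc E cstar X R \<omega>"
    using nonexplosive_rtc cstar_pos by blast
  then have R1_le_AE: "AE \<omega> in M. ?R 1 \<omega> \<le> K0 + (\<Sum>j\<in>?U. K j * ?R j \<omega>)"
    by eventually_elim (rule R1_le)
  have R_borel: "?R j \<in> borel_measurable M" if "j \<in> ?U" for j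
  proof -
    have "R j T cstar \<in> measurable M (count_space UNIV)"
      using R_meas cstar_pos T_pos U(2) that by (simp add: subset_iff)
    then show ?thesis by measurable
  qed
  have "\<exists>\<delta>>0. (\<integral>\<^sup>+ \<omega>. ennreal (exp (\<delta> * (K0 + (\<Sum>j\<in>?U. K j * ?R j \<omega>)))) \<partial>M) < \<infinity>"
    by (rule nn_integral_exp_nonneg_combination_finite) (use U(1) R_borel prop1 K in auto)
  then obtain \<delta> where "\<delta> > 0"
    and "(\<integral>\<^sup>+ \<omega>. ennreal (exp (\<delta> * (K0 + (\<Sum>j\<in>?U. K j * ?R j \<omega>)))) \<partial>M) < \<infinity>"
    by blast
  then show ?thesis by (rule nn_integral_base_power_finite[OF cstar_pos _ R1_le_AE])
qed

end
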